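(* Let $\mathbf{H}$ be any one of the four history systems $\mathbf{G3N}^{Hist}$, $\mathbf{G3NeF}^{Hist}$, $\mathbf{G3CoPC}^{Hist}$, $\mathbf{G3MPC}^{Hist}$. Contraction is admissible in $\mathbf{H}$: for every finite set of formulas $\mathcal H$, finite multiset $\Gamma$ and formulas $\alpha,\varphi$, if $\mathcal H\mid\Gamma,\alpha,\alpha\Rightarrow\varphi$ is derivable in $\mathbf{H}$, then $\mathcal H\mid\Gamma,\alpha\Rightarrow\varphi$ is derivable in $\mathbf{H}$.
   Context: Formulas are generated from a countable set of propositional variables $p,q,\dots$ and the constant $\top$ by the grammar $\varphi::= p\mid\top\mid\varphi\wedge\varphi\mid\varphi\vee\varphi\mid\varphi\to\varphi\mid\neg\varphi$ (there is no constant $\bot$). A history sequent is an expression $\mathcal H\mid\Gamma\Rightarrow\varphi$ where $\mathcal H$ (the history) is a finite set of formulas, $\Gamma$ is a finite multiset of formulas and $\varphi$ is a formula (the goal). $(\psi,\mathcal H)$ denotes $\mathcal H\cup\{\psi\}$, $\emptyset$ is the empty history, $\Gamma,\alpha$ denotes $\Gamma$ with one more occurrence of $\alpha$, and "$\alpha\in\Gamma$" means $\alpha$ occurs in $\Gamma$. History rules ($p$ a propositional variable; side conditions after "if"): (ax) $\mathcal H\mid\Gamma,p\Rightarrow p$; ($\top$) $\mathcal H\mid\Gamma\Rightarrow\top$; ($\to$r$_1$) from $\emptyset\mid\Gamma,\alpha\Rightarrow\beta$ infer $\mathcal H\mid\Gamma\Rightarrow\alpha\to\beta$, if $\alpha\notin\Gamma$;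 ($\to$r$_2$) from $\mathcal H\mid\Gamma\Rightarrow\beta$ infer $\mathcal H\mid\Gamma\Rightarrow\alpha\to\beta$, if $\alpha\in\Gamma$; ($\to$l) from $(\varphi,\mathcal H)\mid\Gamma,\alpha\to\beta\Rightarrow\alpha$ and $\emptyset\mid\Gamma,\alpha\to\beta,\beta\Rightarrow\varphi$ infer $\mathcal H\mid\Gamma,\alpha\to\beta\Rightarrow\varphi$, if $\varphi\notin\mathcal H$ and $\beta\notin\Gamma$; ($\wedge$r) from $\mathcal H\mid\Gamma\Rightarrow\alpha$ and $\mathcal H\mid\Gamma\Rightarrow\beta$ infer $\mathcal H\mid\Gamma\Rightarrow\alpha\wedge\beta$; ($\wedge$l$_1$) from $\emptyset\mid\Gamma,\alpha\wedge\beta,\alpha\Rightarrow\varphi$ infer $\mathcal H\mid\Gamma,\alpha\wedge\beta\Rightarrow\varphi$, if $\alpha\notin\Gamma$; ($\wedge$l$_2$) from $\emptyset\mid\Gamma,\alpha\wedge\beta,\beta\Rightarrow\varphi$ infer $\mathcal H\mid\Gamma,\alpha\wedge\beta\Rightarrow\varphi$, if $\beta\notin\Gamma$; ($\vee$r$_1$), ($\vee$r$_2$) from $\mathcal H\mid\Gamma\Rightarrow\alpha$ (resp. $\mathcal H\mid\Gamma\Rightarrow\beta$) infer $\mathcal H\mid\Gamma\Rightarrow\alpha\vee\beta$; ($\vee$l) from $\emptyset\mid\Gamma,\alpha\vee\beta,\alpha\Rightarrow\varphi$ and $\emptyset\mid\Gamma,\alpha\vee\beta,\beta\Rightarrow\varphi$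 infer $\mathcal H\mid\Gamma,\alpha\vee\beta\Rightarrow\varphi$, if $\alpha,\beta\notin\Gamma$; (n$_1$) from $\emptyset\mid\Gamma,\neg\alpha,\beta\Rightarrow\alpha$ and $\emptyset\mid\Gamma,\neg\alpha,\alpha\Rightarrow\beta$ infer $\mathcal H\mid\Gamma,\neg\alpha\Rightarrow\neg\beta$, if $\beta\notin\Gamma\cup\{\neg\alpha\}$ and $\alpha\notin\Gamma$; (n$_2$) from $\emptyset\mid\Gamma,\neg\alpha,\beta\Rightarrow\alpha$ and $\mathcal H\mid\Gamma,\neg\alpha\Rightarrow\beta$ infer $\mathcal H\mid\Gamma,\neg\alpha\Rightarrow\neg\beta$, if $\beta\notin\Gamma\cup\{\neg\alpha\}$ and $\alpha\in\Gamma$; (n$_3$) from $(\neg\beta,\mathcal H)\mid\Gamma,\neg\alpha\Rightarrow\alpha$ and $\emptyset\mid\Gamma,\neg\alpha,\alpha\Rightarrow\beta$ infer $\mathcal H\mid\Gamma,\neg\alpha\Rightarrow\neg\beta$, if $\neg\beta\notin\mathcal H$, $\beta\in\Gamma\cup\{\neg\alpha\}$ and $\alpha\notin\Gamma$; (n$_4$) from $(\neg\beta,\mathcal H)\mid\Gamma,\neg\alpha\Rightarrow\alpha$ and $\mathcal H\mid\Gamma,\neg\alpha\Rightarrow\beta$ infer $\mathcal H\mid\Gamma,\neg\alpha\Rightarrow\neg\beta$, if $\neg\beta\notin\mathcal H$, $\beta\in\Gamma\cup\{\neg\alpha\}$ and $\alpha\in\Gamma$; (nef) from $(\neg\beta,\mathcal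 H)\mid\Gamma,\neg\alpha\Rightarrow\alpha$ infer $\mathcal H\mid\Gamma,\neg\alpha\Rightarrow\neg\beta$, if $\neg\beta\notin\mathcal H$; (copc$_1$) from $\emptyset\mid\Gamma,\neg\alpha,\beta\Rightarrow\alpha$ infer $\mathcal H\mid\Gamma,\neg\alpha\Rightarrow\neg\beta$, if $\beta\notin\Gamma\cup\{\neg\alpha\}$; (copc$_2$) from $(\neg\beta,\mathcal H)\mid\Gamma,\neg\alpha\Rightarrow\alpha$ infer $\mathcal H\mid\Gamma,\neg\alpha\Rightarrow\neg\beta$, if $\neg\beta\notin\mathcal H$ and $\beta\in\Gamma\cup\{\neg\alpha\}$; (an) from $\emptyset\mid\Gamma,\alpha\Rightarrow\neg\alpha$ infer $\mathcal H\mid\Gamma\Rightarrow\neg\alpha$, if $\alpha\notin\Gamma$. In addition, the left rules ($\to$l), ($\wedge$l$_1$), ($\wedge$l$_2$), ($\vee$l) may only be applied when the goal $\varphi$ of the conclusion is a propositional variable, a negation or a disjunction. The positive history rules are (ax) through ($\vee$l). The four history systems are: $\mathbf{G3N}^{Hist}$ = positive history rules + (n$_1$)–(n$_4$); $\mathbf{G3NeF}^{Hist}$ = positive history rules + (n$_1$)–(n$_4$) + (nef); $\mathbf{G3CoPC}^{Hist}$ = positive history rules + (copc$_1$), (copc$_2$); $\mathbf{G3MPC}^{Hist}$ = positive history rules + (copc$_1$), (copc$_2$), (an). A derivation is a finite tree of rule instances whose leaves are instances of (ax) or ($\top$). *)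

theory Defs
  imports Main "HOL-Library.Multiset"
begin

datatype fm = Var nat | Top | And fm fm | Or fm fm | Imp fm fm | Neg fm

datatype sys = G3N | G3NeF | G3CoPC | G3MPC

text \<open>Goals on which left rules may be applied: variable, negation or disjunction.\<close>
fun lgoal :: "fm \<Rightarrow> bool" where
  "lgoal (Var p) = True"
| "lgoal (Neg a) = True"
| "lgoal (Or a b) = True"
| "lgoal _ = False"

definition has_n :: "sys \<Rightarrow> bool" where
  "has_n S \<longleftrightarrow> S = G3N \<or> S = G3NeF"

definition has_copc :: "sys \<Rightarrow> bool" where
  "has_copc S \<longleftrightarrow> S = G3CoPC \<or> S = G3MPC"

text \<open>deriv S H \<Gamma> \<phi>: the history sequent H | \<Gamma> \<Rightarrow> \<phi> is derivable in system S.\<close>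
inductive deriv :: "sys \<Rightarrow> fm set \<Rightarrow> fm multiset \<Rightarrow> fm \<Rightarrow> bool" where
  ax: "deriv S H (add_mset (Var p) \<Gamma>) (Var p)"
| top: "deriv S H \<Gamma> Top"
| impR1: "\<lbrakk> a \<notin># \<Gamma>; deriv S {} (add_mset a \<Gamma>) b \<rbrakk> \<Longrightarrow> deriv S H \<Gamma> (Imp a b)"
| impR2: "\<lbrakk> a \<in># \<Gamma>; deriv S H \<Gamma> b \<rbrakk> \<Longrightarrow> deriv S H \<Gamma> (Imp a b)"
| impL: "\<lbrakk> lgoal \<phi>; \<phi> \<notin> H; b \<notin># \<Gamma>;
           deriv S (insert \<phi> H) (add_mset (Imp a b) \<Gamma>) a;
           deriv S {} (add_mset b (add_mset (Imp a b) \<Gamma>)) \<phi> \<rbrakk>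
         \<Longrightarrow> deriv S H (add_mset (Imp a b) \<Gamma>) \<phi>"
| andR: "\<lbrakk> deriv S H \<Gamma> a; deriv S H \<Gamma> b \<rbrakk> \<Longrightarrow> deriv S H \<Gamma> (And a b)"
| andL1: "\<lbrakk> lgoal \<phi>; a \<notin># \<Gamma>; deriv S {} (add_mset a (add_mset (And a b) \<Gamma>)) \<phi> \<rbrakk>
         \<Longrightarrow> deriv S H (add_mset (And a b) \<Gamma>) \<phi>"
| andL2: "\<lbrakk> lgoal \<phi>; b \<notin># \<Gamma>; deriv S {} (add_mset b (add_mset (And a b) \<Gamma>)) \<phi> \<rbrakk>
         \<Longrightarrow> deriv S H (add_mset (And a b) \<Gamma>) \<phi>"
| orR1: "deriv S H \<Gamma> a \<Longrightarrow> deriv S H \<Gamma> (Or a b)"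
| orR2: "deriv S H \<Gamma> b \<Longrightarrow> deriv S H \<Gamma> (Or a b)"
| orL: "\<lbrakk> lgoal \<phi>; a \<notin># \<Gamma>; b \<notin># \<Gamma>;
          deriv S {} (add_mset a (add_mset (Or a b) \<Gamma>)) \<phi>;
          deriv S {} (add_mset b (add_mset (Or a b) \<Gamma>)) \<phi> \<rbrakk>
        \<Longrightarrow> deriv S H (add_mset (Or a b) \<Gamma>) \<phi>"
| n1: "\<lbrakk> has_n S; b \<notin># \<Gamma>; b \<noteq> Neg a; a \<notin># \<Gamma>;
         deriv S {} (add_mset b (add_mset (Neg a) \<Gamma>)) a;
         deriv S {} (add_mset a (add_mset (Neg a) \<Gamma>)) b \<rbrakk>
       \<Longrightarrow> deriv S H (add_mset (Neg a) \<Gamma>) (Neg b)"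
| n2: "\<lbrakk> has_n S; b \<notin># \<Gamma>; b \<noteq> Neg a; a \<in># \<Gamma>;
         deriv S {} (add_mset b (add_mset (Neg a) \<Gamma>)) a;
         deriv S H (add_mset (Neg a) \<Gamma>) b \<rbrakk>
       \<Longrightarrow> deriv S H (add_mset (Neg a) \<Gamma>) (Neg b)"
| n3: "\<lbrakk> has_n S; Neg b \<notin> H; b \<in># \<Gamma> \<or> b = Neg a; a \<notin># \<Gamma>;
         deriv S (insert (Neg b) H) (add_mset (Neg a) \<Gamma>) a;
         deriv S {} (add_mset a (add_mset (Neg a) \<Gamma>)) b \<rbrakk>
       \<Longrightarrow> deriv S H (add_mset (Neg a) \<Gamma>) (Neg b)"
| n4: "\<lbrakk> has_n S; Neg b \<notin> H; b \<in># \<Gamma> \<or> b = Neg a; a \<in># \<Gamma>;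
         deriv S (insert (Neg b) H) (add_mset (Neg a) \<Gamma>) a;
         deriv S H (add_mset (Neg a) \<Gamma>) b \<rbrakk>
       \<Longrightarrow> deriv S H (add_mset (Neg a) \<Gamma>) (Neg b)"
| nef: "\<lbrakk> S = G3NeF; Neg b \<notin> H;
          deriv S (insert (Neg b) H) (add_mset (Neg a) \<Gamma>) a \<rbrakk>
        \<Longrightarrow> deriv S H (add_mset (Neg a) \<Gamma>) (Neg b)"
| copc1: "\<lbrakk> has_copc S; b \<notin># \<Gamma>; b \<noteq> Neg a;
            deriv S {} (add_mset b (add_mset (Neg a) \<Gamma>)) a \<rbrakk>
          \<Longrightarrow> deriv S H (add_mset (Neg a) \<Gamma>) (Neg b)"
| copc2: "\<lbrakk> has_copc S; Neg b \<notin> H; b \<in># \<Gamma> \<or> b = Neg a;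
            deriv S (insert (Neg b) H) (add_mset (Neg a) \<Gamma>) a \<rbrakk>
          \<Longrightarrow> deriv S H (add_mset (Neg a) \<Gamma>) (Neg b)"
| an: "\<lbrakk> S = G3MPC; a \<notin># \<Gamma>; deriv S {} (add_mset a \<Gamma>) (Neg a) \<rbrakk>
       \<Longrightarrow> deriv S H \<Gamma> (Neg a)"

end

theory Submission
  imports Defs
begin

text \<open>Every side condition of the history rules asks only whether a formula occurs in the
  context, never how often. Hence derivability of a history sequent depends only on the set
  of formulas underlying its context, and contraction is the special case where the two contexts
  have the same underlying set.\<close>

lemma fm_neq_immediate_subformula [simp]:
  "a \<noteq> Imp a b" "b \<noteq> Imp a b" "a \<noteq> And a b" "b \<noteq> And a b"
  "a \<noteq> Or a b" "b \<noteq> Or a b" "a \<noteq> Neg a"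
  by (induction b) auto

lemma set_mset_eq_add_msetE:
  assumes "set_mset (add_mset x \<Gamma>) = set_mset D"
  obtains \<Delta> where "D = add_mset x \<Delta>" and "set_mset (add_mset x \<Delta>) = set_mset (add_mset x \<Gamma>)"
proof
  have "x \<in># D" using assms by auto
  then show "D = add_mset x (D - {#x#})" by simp
  then show "set_mset (add_mset x (D - {#x#})) = set_mset (add_mset x \<Gamma>)"
    using assms by simp
qed

lemma mem_iff_of_set_mset_add_mset_eq:
  assumes "set_mset (add_mset x \<Delta>) = set_mset (add_mset x \<Gamma>)" and "y \<noteq> x"
  shows "y \<in># \<Delta> \<longleftrightarrow> y \<in># \<Gamma>"
  using assms by (metis insert_iff set_mset_add_mset_insert)

lemma mem_or_iff_of_set_mset_add_mset_eq:
  assumes "set_mset (add_mset x \<Delta>) = set_mset (add_mset x \<Gamma>)"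
  shows "y \<in># \<Delta> \<or> y = x \<longleftrightarrow> y \<in># \<Gamma> \<or> y = x"
  using assms by (metis insert_iff set_mset_add_mset_insert)

lemma deriv_set_mset_cong:
  assumes "deriv S H \<Gamma> \<phi>" and "set_mset \<Gamma> = set_mset \<Delta>"
  shows "deriv S H \<Delta> \<phi>"
  using assms
proof (induction arbitrary: \<Delta> rule: deriv.induct)
  case (ax S H p \<Gamma>)
  then show ?case by (metis deriv.ax set_mset_eq_add_msetE)
next
  case (top S H \<Gamma>)
  show ?case by (rule deriv.top)
next
  case (impR1 a \<Gamma> S b H)
  show ?case by (rule deriv.impR1) (use impR1 in auto)
next
  case (impR2 a \<Gamma> S H b)
  show ?case by (rule deriv.impR2) (use impR2 in auto)
next
  case (andR S H \<Gamma> a b)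
  show ?case by (rule deriv.andR) (use andR in auto)
next
  case (orR1 S H \<Gamma> a b)
  show ?case by (rule deriv.orR1) (use orR1 in auto)
next
  case (orR2 S H \<Gamma> b a)
  show ?case by (rule deriv.orR2) (use orR2 in auto)
next
  case (an S a \<Gamma> H)
  show ?case by (rule deriv.an) (use an in auto)
next
  \<comment> \<open>For a left rule, the new context is split off the principal formula; the side conditions
    mention only other formulas, or the principal one inside a disjunction, so they transfer.\<close>
  case (impL \<phi> H b \<Gamma> S a)
  from impL.prems obtain \<Delta>' where \<Delta>: "\<Delta> = add_mset (Imp a b) \<Delta>'"
    and same: "set_mset (add_mset (Imp a b) \<Delta>') = set_mset (add_mset (Imp a b) \<Gamma>)"
    by (rule set_mset_eq_add_msetE)
  note mem =
    mem_iff_of_set_mset_add_mset_eq[OF same] mem_or_iff_of_set_mset_add_mset_eq[OF same]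
  show ?case unfolding \<Delta>
    by (rule deriv.impL) (rule impL.IH, use same in simp | simp add: impL.hyps mem)+
next
  case (andL1 \<phi> a \<Gamma> S b H)
  from andL1.prems obtain \<Delta>' where \<Delta>: "\<Delta> = add_mset (And a b) \<Delta>'"
    and same: "set_mset (add_mset (And a b) \<Delta>') = set_mset (add_mset (And a b) \<Gamma>)"
    by (rule set_mset_eq_add_msetE)
  note mem =
    mem_iff_of_set_mset_add_mset_eq[OF same] mem_or_iff_of_set_mset_add_mset_eq[OF same]
  show ?case unfolding \<Delta>
    by (rule deriv.andL1) (rule andL1.IH, use same in simp | simp add: andL1.hyps mem)+
next
  case (andL2 \<phi> b \<Gamma> S a H)
  from andL2.prems obtain \<Delta>' where \<Delta>: "\<Delta> = add_mset (And a b) \<Delta>'"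
    and same: "set_mset (add_mset (And a b) \<Delta>') = set_mset (add_mset (And a b) \<Gamma>)"
    by (rule set_mset_eq_add_msetE)
  note mem =
    mem_iff_of_set_mset_add_mset_eq[OF same] mem_or_iff_of_set_mset_add_mset_eq[OF same]
  show ?case unfolding \<Delta>
    by (rule deriv.andL2) (rule andL2.IH, use same in simp | simp add: andL2.hyps mem)+
next
  case (orL \<phi> a \<Gamma> b S H)
  from orL.prems obtain \<Delta>' where \<Delta>: "\<Delta> = add_mset (Or a b) \<Delta>'"
    and same: "set_mset (add_mset (Or a b) \<Delta>') = set_mset (add_mset (Or a b) \<Gamma>)"
    by (rule set_mset_eq_add_msetE)
  note mem =
    mem_iff_of_set_mset_add_mset_eq[OF same] mem_or_iff_of_set_mset_add_mset_eq[OF same]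
  show ?case unfolding \<Delta>
    by (rule deriv.orL) (rule orL.IH, use same in simp | simp add: orL.hyps mem)+
next
  case (n1 S b \<Gamma> a H)
  from n1.prems obtain \<Delta>' where \<Delta>: "\<Delta> = add_mset (Neg a) \<Delta>'"
    and same: "set_mset (add_mset (Neg a) \<Delta>') = set_mset (add_mset (Neg a) \<Gamma>)"
    by (rule set_mset_eq_add_msetE)
  note mem =
    mem_iff_of_set_mset_add_mset_eq[OF same] mem_or_iff_of_set_mset_add_mset_eq[OF same]
  show ?case unfolding \<Delta>
    by (rule deriv.n1) (rule n1.IH, use same in simp | simp add: n1.hyps mem)+
next
  case (n2 S b \<Gamma> a H)
  from n2.prems obtain \<Delta>' where \<Delta>: "\<Delta> = add_mset (Neg a) \<Delta>'"
    and same: "set_mset (add_mset (Neg a) \<Delta>') = set_mset (add_mset (Neg a) \<Gamma>)"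
    by (rule set_mset_eq_add_msetE)
  note mem =
    mem_iff_of_set_mset_add_mset_eq[OF same] mem_or_iff_of_set_mset_add_mset_eq[OF same]
  show ?case unfolding \<Delta>
    by (rule deriv.n2) (rule n2.IH, use same in simp | simp add: n2.hyps mem)+
next
  case (n3 S b H \<Gamma> a)
  from n3.prems obtain \<Delta>' where \<Delta>: "\<Delta> = add_mset (Neg a) \<Delta>'"
    and same: "set_mset (add_mset (Neg a) \<Delta>') = set_mset (add_mset (Neg a) \<Gamma>)"
    by (rule set_mset_eq_add_msetE)
  note mem =
    mem_iff_of_set_mset_add_mset_eq[OF same] mem_or_iff_of_set_mset_add_mset_eq[OF same]
  show ?case unfolding \<Delta>
    by (rule deriv.n3) (rule n3.IH, use same in simp | simp add: n3.hyps mem)+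
next
  case (n4 S b H \<Gamma> a)
  from n4.prems obtain \<Delta>' where \<Delta>: "\<Delta> = add_mset (Neg a) \<Delta>'"
    and same: "set_mset (add_mset (Neg a) \<Delta>') = set_mset (add_mset (Neg a) \<Gamma>)"
    by (rule set_mset_eq_add_msetE)
  note mem =
    mem_iff_of_set_mset_add_mset_eq[OF same] mem_or_iff_of_set_mset_add_mset_eq[OF same]
  show ?case unfolding \<Delta>
    by (rule deriv.n4) (rule n4.IH, use same in simp | simp add: n4.hyps mem)+
next
  case (nef S b H a \<Gamma>)
  from nef.prems obtain \<Delta>' where \<Delta>: "\<Delta> = add_mset (Neg a) \<Delta>'"
    and same: "set_mset (add_mset (Neg a) \<Delta>') = set_mset (add_mset (Neg a) \<Gamma>)"
    by (rule set_mset_eq_add_msetE)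
  note mem =
    mem_iff_of_set_mset_add_mset_eq[OF same] mem_or_iff_of_set_mset_add_mset_eq[OF same]
  show ?case unfolding \<Delta>
    by (rule deriv.nef) (rule nef.IH, use same in simp | simp add: nef.hyps mem)+
next
  case (copc1 S b \<Gamma> a H)
  from copc1.prems obtain \<Delta>' where \<Delta>: "\<Delta> = add_mset (Neg a) \<Delta>'"
    and same: "set_mset (add_mset (Neg a) \<Delta>') = set_mset (add_mset (Neg a) \<Gamma>)"
    by (rule set_mset_eq_add_msetE)
  note mem =
    mem_iff_of_set_mset_add_mset_eq[OF same] mem_or_iff_of_set_mset_add_mset_eq[OF same]
  show ?case unfolding \<Delta>
    by (rule deriv.copc1) (rule copc1.IH, use same in simp | simp add: copc1.hyps mem)+
next
  case (copc2 S b H \<Gamma> a)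
  from copc2.prems obtain \<Delta>' where \<Delta>: "\<Delta> = add_mset (Neg a) \<Delta>'"
    and same: "set_mset (add_mset (Neg a) \<Delta>') = set_mset (add_mset (Neg a) \<Gamma>)"
    by (rule set_mset_eq_add_msetE)
  note mem =
    mem_iff_of_set_mset_add_mset_eq[OF same] mem_or_iff_of_set_mset_add_mset_eq[OF same]
  show ?case unfolding \<Delta>
    by (rule deriv.copc2) (rule copc2.IH, use same in simp | simp add: copc2.hyps mem)+
qed
theorem lemma5p3:
  fixes S :: sys and H :: "fm set" and \<Gamma> :: "fm multiset" and \<alpha> \<phi> :: fm
  assumes "finite H"
    and "deriv S H (add_mset \<alpha> (add_mset \<alpha> \<Gamma>)) \<phi>"
  shows "deriv S H (add_mset \<alpha> \<Gamma>) \<phi>"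
  using deriv_set_mset_cong[OF assms(2)] by simp

end
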